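(* Let $R$ be a ring and $I$ a nilpotent ideal of $R$. If $R/I$ is almost Armendariz, then $R$ is almost Armendariz.
   Context: All rings are associative with identity. For a ring $R$, $P(R)$ denotes the prime radical of $R$ (the intersection of all prime ideals of $R$, equivalently the set of strongly nilpotent elements of $R$). A ring $R$ is called almost Armendariz if whenever $f(x)=\sum_{i=0}^m a_ix^i$ and $g(x)=\sum_{j=0}^n b_jx^j\in R[x]$ satisfy $f(x)g(x)=0$, then $a_ib_j\in P(R)$ for all $0\le i\le m$, $0\le j\le n$. *)

theory Defs
  imports "HOL-Algebra.UnivPoly" "HOL-Algebra.QuotRing"
begin

(* Prime ideal of a (not necessarily commutative) ring with identity:
   a proper ideal P such that for all ideals A, B with AB \<subseteq> P,
   A \<subseteq> P or B \<subseteq> P.  (AB \<subseteq> P iff all products a b lie in P, since P is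
   closed under finite sums.) *)
definition nc_prime_ideal :: "'a set \<Rightarrow> ('a, 'b) ring_scheme \<Rightarrow> bool" where
  "nc_prime_ideal P R \<longleftrightarrow> ideal P R \<and> P \<noteq> carrier R \<and>
     (\<forall>A B. ideal A R \<longrightarrow> ideal B R \<longrightarrow>
        (\<forall>a\<in>A. \<forall>b\<in>B. a \<otimes>\<^bsub>R\<^esub> b \<in> P) \<longrightarrow> A \<subseteq> P \<or> B \<subseteq> P)"

definition prime_radical :: "('a, 'b) ring_scheme \<Rightarrow> 'a set" where
  "prime_radical R = {x \<in> carrier R. \<forall>P. nc_prime_ideal P R \<longrightarrow> x \<in> P}"

(* nilpotent ideal: I^n = 0 for some n \<ge> 1, i.e. every product of n elements of I is 0 *)
definition nilpotent_ideal :: "'a set \<Rightarrow> ('a, 'b) ring_scheme \<Rightarrow> bool" where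
  "nilpotent_ideal I R \<longleftrightarrow> ideal I R \<and> (\<exists>n::nat. n \<ge> 1 \<and>
     (\<forall>xs. length xs = n \<longrightarrow> set xs \<subseteq> I \<longrightarrow>
        foldr (\<lambda>x y. x \<otimes>\<^bsub>R\<^esub> y) xs \<one>\<^bsub>R\<^esub> = \<zero>\<^bsub>R\<^esub>))"

definition almost_armendariz :: "('a, 'b) ring_scheme \<Rightarrow> bool" where
  "almost_armendariz R \<longleftrightarrow>
     (\<forall>f \<in> carrier (UP R). \<forall>g \<in> carrier (UP R).
        f \<otimes>\<^bsub>UP R\<^esub> g = \<zero>\<^bsub>UP R\<^esub> \<longrightarrow>
        (\<forall>i j. coeff (UP R) f i \<otimes>\<^bsub>R\<^esub> coeff (UP R) g j \<in> prime_radical R))"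

end

theory Submission
  imports Defs "HOL-Algebra.Divisibility"
begin

text \<open>A nilpotent ideal I lies in every prime ideal P: a prime ideal is semiprime (x R x \<subseteq> P
  forces x \<in> P), and descending on the length of products of elements of I, starting from the
  products of length n that vanish, shows that all such products lie in P. Hence every prime ideal
  of R contains I and maps onto a prime ideal of R/I, so x lies in P(R) as soon as its residue lies
  in P(R/I). Reducing coefficients modulo I turns f g = 0 in R[x] into a relation in (R/I)[x], so each
  a_i b_j + I lies in P(R/I), and therefore a_i b_j \<in> P(R).\<close>

lemma (in ring) left_residual_ideal:
  assumes "ideal P R" and "S \<subseteq> carrier R"
    and "\<And>s r. s \<in> S \<Longrightarrow> r \<in> carrier R \<Longrightarrow> r \<otimes> s \<in> S"
  shows "ideal {x \<in> carrier R. \<forall>s\<in>S. x \<otimes> s \<in> P} R"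
proof -
  interpret P: ideal P R by fact
  show ?thesis
  proof (rule idealI[OF ring_axioms add.subgroupI])
    show "{x \<in> carrier R. \<forall>s\<in>S. x \<otimes> s \<in> P} \<noteq> {}"
      using assms(2) by (auto intro!: exI[of _ \<zero>])
  qed (use assms in \<open>auto simp: l_minus l_distr m_assoc subsetD P.I_l_closed\<close>)
qed

lemma (in ring) right_residual_ideal:
  assumes "ideal P R" and "S \<subseteq> carrier R"
    and "\<And>s r. s \<in> S \<Longrightarrow> r \<in> carrier R \<Longrightarrow> s \<otimes> r \<in> S"
  shows "ideal {y \<in> carrier R. \<forall>s\<in>S. s \<otimes> y \<in> P} R"
proof -
  interpret P: ideal P R by fact
  show ?thesis
  proof (rule idealI[OF ring_axioms add.subgroupI])
    show "{y \<in> carrier R. \<forall>s\<in>S. s \<otimes> y \<in> P} \<noteq> {}"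
      using assms(2) by (auto intro!: exI[of _ \<zero>])
  qed (use assms in \<open>auto simp: r_minus r_distr m_assoc[symmetric] subsetD P.I_r_closed\<close>)
qed

lemma (in ring) nc_prime_ideal_elementwise:
  assumes P: "nc_prime_ideal P R" and a: "a \<in> carrier R" and b: "b \<in> carrier R"
    and aRb: "\<And>r. r \<in> carrier R \<Longrightarrow> a \<otimes> r \<otimes> b \<in> P"
  shows "a \<in> P \<or> b \<in> P"
proof -
  have "ideal P R" using P by (simp add: nc_prime_ideal_def)
  define B where "B = {y \<in> carrier R. \<forall>s\<in>(\<otimes>) a ` carrier R. s \<otimes> y \<in> P}"
  define A where "A = {x \<in> carrier R. \<forall>y\<in>B. x \<otimes> y \<in> P}"
  have "ideal B R"
    unfolding B_def using \<open>ideal P R\<close> a by (intro right_residual_ideal) (auto simp: m_assoc)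
  then have "ideal A R"
    unfolding A_def using \<open>ideal P R\<close> by (intro left_residual_ideal) (auto simp: ideal.I_l_closed ideal.Icarr)
  moreover have "a \<in> A"
    using a by (auto simp: A_def B_def dest: bspec[of _ _ \<one>])
  moreover have "b \<in> B"
    using b aRb by (auto simp: B_def)
  moreover have "\<forall>x\<in>A. \<forall>y\<in>B. x \<otimes> y \<in> P"
    by (simp add: A_def)
  ultimately show ?thesis
    using P \<open>ideal B R\<close> unfolding nc_prime_ideal_def by blast
qed

lemma (in monoid) foldr_mult_eq:
  assumes "set xs \<subseteq> carrier G" and "b \<in> carrier G"
  shows "foldr (\<otimes>) xs b = foldr (\<otimes>) xs \<one> \<otimes> b"
  using assms by (induct xs) (auto simp: m_assoc)

lemma (in monoid) multlist_append:
  assumes "set xs \<subseteq> carrier G" and "set ys \<subseteq> carrier G"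
  shows "foldr (\<otimes>) (xs @ ys) \<one> = foldr (\<otimes>) xs \<one> \<otimes> foldr (\<otimes>) ys \<one>"
  using assms by (simp add: foldr_mult_eq[of xs "foldr (\<otimes>) ys \<one>"])

lemma (in ring) multlist_in_ideal:
  assumes "ideal I R" and "set xs \<subseteq> I" and "xs \<noteq> []"
  shows "foldr (\<otimes>) xs \<one> \<in> I"
proof -
  obtain x ys where "xs = x # ys" using assms(3) by (cases xs) auto
  then show ?thesis
    using assms by (auto intro: ideal.I_r_closed dest: ideal.Icarr)
qed

lemma (in ring) nilpotent_ideal_long_multlist_zero:
  assumes "nilpotent_ideal I R"
  obtains n where "n \<ge> 1"
    and "\<And>xs. set xs \<subseteq> I \<Longrightarrow> n \<le> length xs \<Longrightarrow> foldr (\<otimes>) xs \<one> = \<zero>"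
proof -
  have "I \<subseteq> carrier R"
    using assms by (auto simp: nilpotent_ideal_def dest: ideal.Icarr)
  obtain n where "n \<ge> 1"
    and zero: "\<And>xs. length xs = n \<Longrightarrow> set xs \<subseteq> I \<Longrightarrow> foldr (\<otimes>) xs \<one> = \<zero>"
    using assms unfolding nilpotent_ideal_def by blast
  moreover have "foldr (\<otimes>) xs \<one> = \<zero>" if "set xs \<subseteq> I" "n \<le> length xs" for xs
  proof -
    have "foldr (\<otimes>) xs \<one> = foldr (\<otimes>) (take n xs) \<one> \<otimes> foldr (\<otimes>) (drop n xs) \<one>"
      using that \<open>I \<subseteq> carrier R\<close> multlist_append[of "take n xs" "drop n xs"]
      by (metis append_take_drop_id set_drop_subset set_take_subset subset_trans)
    also have "foldr (\<otimes>) (take n xs) \<one> = \<zero>"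
      using that by (intro zero) (auto dest: in_set_takeD)
    finally show ?thesis
      using that \<open>I \<subseteq> carrier R\<close> by (metis l_null multlist_closed set_drop_subset subset_trans)
  qed
  ultimately show ?thesis using that by blast
qed

lemma (in ring) nc_prime_ideal_semiprime:
  assumes "nc_prime_ideal P R" and "x \<in> carrier R"
    and "\<And>r. r \<in> carrier R \<Longrightarrow> x \<otimes> r \<otimes> x \<in> P"
  shows "x \<in> P"
  using nc_prime_ideal_elementwise[OF assms(1,2,2,3)] by blast

lemma (in ring) nilpotent_ideal_subset_nc_prime_ideal:
  assumes I: "nilpotent_ideal I R" and P: "nc_prime_ideal P R"
  shows "I \<subseteq> P"
proof -
  have "ideal I R" and "ideal P R"
    using I P by (simp_all add: nilpotent_ideal_def nc_prime_ideal_def)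
  then have I_carr: "I \<subseteq> carrier R" by (auto dest: ideal.Icarr)
  obtain n where "n \<ge> 1"
    and zero: "\<And>xs. set xs \<subseteq> I \<Longrightarrow> n \<le> length xs \<Longrightarrow> foldr (\<otimes>) xs \<one> = \<zero>"
    using nilpotent_ideal_long_multlist_zero[OF I] by blast
  \<comment> \<open>Downward induction on m: if x is a product of m elements of I, then x r x is the
    product of the m + 1 elements xs @ [r \<otimes> x] of I.\<close>
  have long_products_in_P: "0 < m \<Longrightarrow> \<forall>xs. set xs \<subseteq> I \<longrightarrow> m \<le> length xs \<longrightarrow> foldr (\<otimes>) xs \<one> \<in> P"
    if "m \<le> n" for m
    using that
  proof (induction m rule: inc_induct)
    case base
    then show ?case
      using zero \<open>ideal P R\<close> by (simp add: additive_subgroup.zero_closed ideal.axioms(1))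
  next
    case (step m)
    show ?case
    proof (intro allI impI)
      fix xs assume xs: "set xs \<subseteq> I" "m \<le> length xs"
      let ?x = "foldr (\<otimes>) xs \<one>"
      have x_I: "?x \<in> I"
        using multlist_in_ideal[OF \<open>ideal I R\<close> xs(1)] xs(2) step.prems by fastforce
      then have x_carr: "?x \<in> carrier R" using I_carr by blast
      have "?x \<otimes> r \<otimes> ?x \<in> P" if r: "r \<in> carrier R" for r
      proof -
        have "r \<otimes> ?x \<in> I"
          using x_I r by (simp add: ideal.I_l_closed[OF \<open>ideal I R\<close>])
        then have "set (xs @ [r \<otimes> ?x]) \<subseteq> I" and "Suc m \<le> length (xs @ [r \<otimes> ?x])"
          using xs by auto
        then have "foldr (\<otimes>) (xs @ [r \<otimes> ?x]) \<one> \<in> P"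
          using step.IH[OF zero_less_Suc] by blast
        moreover have "foldr (\<otimes>) (xs @ [r \<otimes> ?x]) \<one> = ?x \<otimes> r \<otimes> ?x"
          using xs(1) I_carr r x_carr by (simp add: multlist_append m_assoc del: foldr_append)
        ultimately show ?thesis by simp
      qed
      then show "?x \<in> P"
        by (rule nc_prime_ideal_semiprime[OF P x_carr])
    qed
  qed
  note products_in_P = long_products_in_P[OF \<open>1 \<le> n\<close> zero_less_one, rule_format]
  show ?thesis
  proof
    fix x assume "x \<in> I"
    then have "foldr (\<otimes>) [x] \<one> \<in> P" using products_in_P[of "[x]"] by simp
    then show "x \<in> P" using \<open>x \<in> I\<close> I_carr by auto
  qed
qed

lemma (in ring) quot_ideal_imageE:
  assumes "ideal I R" and "ideal J' (R Quot I)"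
  obtains J where "ideal J R" and "I \<subseteq> J" and "J' = (+>) I ` J"
proof -
  have "J' \<in> (\<lambda>J. (+>) I ` J) ` {J. ideal J R \<and> I \<subseteq> J}"
    using bij_betw_imp_surj_on[OF quot_ideal_correspondence[OF assms(1)]] assms(2) by simp
  then show ?thesis
    using that by blast
qed

lemma (in ring) rcos_in_image_iff:
  assumes "ideal I R" and "ideal P R" and "I \<subseteq> P" and "x \<in> carrier R"
  shows "I +> x \<in> (+>) I ` P \<longleftrightarrow> x \<in> P"
proof -
  have "(+>) I ` P \<subseteq> carrier (R Quot I)"
    using ring_ideal_imp_quot_ideal[OF assms(1,2)] by (simp add: ideal.Icarr subsetI)
  then have "I +> x \<in> (+>) I ` P \<longleftrightarrow> x \<in> \<Union> ((+>) I ` P)"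
    by (rule canonical_proj_vimage_mem_iff[OF assms(1) _ assms(4), symmetric])
  also have "\<Union> ((+>) I ` P) = P"
    using ideal_incl_iff[OF assms(1,2)] assms(3) by simp
  finally show ?thesis .
qed

lemma (in ring) nc_prime_ideal_quotient:
  assumes I: "ideal I R" and "I \<subseteq> P" and P: "nc_prime_ideal P R"
  shows "nc_prime_ideal ((+>) I ` P) (R Quot I)"
proof -
  interpret I: ideal I R by (rule I)
  interpret h: ring_hom_ring R "R Quot I" "(+>) I" by (rule I.rcos_ring_hom_ring)
  have "ideal P R" and "P \<noteq> carrier R"
    and P_prime: "\<And>A B. ideal A R \<Longrightarrow> ideal B R \<Longrightarrow> \<forall>a\<in>A. \<forall>b\<in>B. a \<otimes> b \<in> P \<Longrightarrow> A \<subseteq> P \<or> B \<subseteq> P"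
    using P by (simp_all add: nc_prime_ideal_def)
  note mem_iff = rcos_in_image_iff[OF I \<open>ideal P R\<close> \<open>I \<subseteq> P\<close>]
  have "I +> \<one> \<notin> (+>) I ` P"
    using mem_iff[OF one_closed] \<open>P \<noteq> carrier R\<close> ideal.one_imp_carrier[OF \<open>ideal P R\<close>] by blast
  then have "(+>) I ` P \<noteq> carrier (R Quot I)"
    using h.hom_closed[OF one_closed] by blast
  moreover have "A' \<subseteq> (+>) I ` P \<or> B' \<subseteq> (+>) I ` P"
    if "ideal A' (R Quot I)" and "ideal B' (R Quot I)"
      and AB: "\<forall>a\<in>A'. \<forall>b\<in>B'. a \<otimes>\<^bsub>R Quot I\<^esub> b \<in> (+>) I ` P" for A' B'
  proof -
    obtain A where A: "ideal A R" "A' = (+>) I ` A"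
      using quot_ideal_imageE[OF I \<open>ideal A' _\<close>] by blast
    obtain B where B: "ideal B R" "B' = (+>) I ` B"
      using quot_ideal_imageE[OF I \<open>ideal B' _\<close>] by blast
    have "a \<otimes> b \<in> P" if "a \<in> A" "b \<in> B" for a b
    proof -
      have carr: "a \<in> carrier R" "b \<in> carrier R"
        using that A B by (simp_all add: ideal.Icarr)
      then have "I +> (a \<otimes> b) = (I +> a) \<otimes>\<^bsub>R Quot I\<^esub> (I +> b)"
        by simp
      also have "\<dots> \<in> (+>) I ` P"
        using AB that by (simp add: A(2) B(2))
      finally show ?thesis
        using mem_iff[OF m_closed[OF carr]] by blast
    qed
    then have "A \<subseteq> P \<or> B \<subseteq> P"
      using P_prime[OF A(1) B(1)] by blast
    then show ?thesis
      using A B by blast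
  qed
  ultimately show ?thesis
    using ring_ideal_imp_quot_ideal[OF I \<open>ideal P R\<close>] by (simp add: nc_prime_ideal_def)
qed

lemma (in ring) prime_radical_reflect_nilpotent_quotient:
  assumes "ideal I R" and "nilpotent_ideal I R" and "x \<in> carrier R"
    and "I +> x \<in> prime_radical (R Quot I)"
  shows "x \<in> prime_radical R"
  unfolding prime_radical_def
proof (intro CollectI conjI allI impI)
  fix P assume P: "nc_prime_ideal P R"
  then have "I \<subseteq> P" and "ideal P R"
    using assms(2) nilpotent_ideal_subset_nc_prime_ideal by (auto simp: nc_prime_ideal_def)
  moreover have "I +> x \<in> (+>) I ` P"
    using assms(4) nc_prime_ideal_quotient[OF assms(1) \<open>I \<subseteq> P\<close> P] by (simp add: prime_radical_def)
  ultimately show "x \<in> P"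
    using rcos_in_image_iff[OF assms(1)] assms(3) by blast
qed (rule assms(3))

lemma coeff_UP: "p \<in> carrier (UP R) \<Longrightarrow> coeff (UP R) p n = p n"
  by (simp add: UP_def)

lemma (in ring_hom_ring) UP_comp_closed:
  assumes "f \<in> carrier (UP R)"
  shows "h \<circ> f \<in> carrier (UP S)"
proof -
  obtain n where "bound \<zero> n f"
    using assms by (auto simp: UP_def)
  then have "bound \<zero>\<^bsub>S\<^esub> n (h \<circ> f)"
    by (simp add: bound_def)
  moreover have "(h \<circ> f) k \<in> carrier S" for k
    using assms by (simp add: UP_def mem_upD)
  ultimately show ?thesis
    unfolding UP_def partial_object.simps by (intro mem_upI) auto
qed

lemma (in ring_hom_ring) UP_comp_mult:
  assumes "f \<in> carrier (UP R)" and "g \<in> carrier (UP R)"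
  shows "h \<circ> (f \<otimes>\<^bsub>UP R\<^esub> g) = (h \<circ> f) \<otimes>\<^bsub>UP S\<^esub> (h \<circ> g)"
proof -
  have "h (\<Oplus>i\<in>{..n}. f i \<otimes> g (n - i)) = (\<Oplus>\<^bsub>S\<^esub>i\<in>{..n}. h (f i) \<otimes>\<^bsub>S\<^esub> h (g (n - i)))" for n
    using assms by (simp add: UP_def mem_upD Pi_def comp_def)
  then show ?thesis
    using assms UP_comp_closed[OF assms(1)] UP_comp_closed[OF assms(2)]
    by (auto simp: UP_def comp_def)
qed

lemma (in ring_hom_ring) almost_armendariz_reflect:
  assumes "almost_armendariz S"
    and reflect: "\<And>x. x \<in> carrier R \<Longrightarrow> h x \<in> prime_radical S \<Longrightarrow> x \<in> prime_radical R"
  shows "almost_armendariz R"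
  unfolding almost_armendariz_def
proof (intro ballI impI allI)
  fix f g i j
  assume f: "f \<in> carrier (UP R)" and g: "g \<in> carrier (UP R)"
    and fg: "f \<otimes>\<^bsub>UP R\<^esub> g = \<zero>\<^bsub>UP R\<^esub>"
  have "(h \<circ> f) \<otimes>\<^bsub>UP S\<^esub> (h \<circ> g) = h \<circ> (f \<otimes>\<^bsub>UP R\<^esub> g)"
    by (rule UP_comp_mult[OF f g, symmetric])
  also have "\<dots> = \<zero>\<^bsub>UP S\<^esub>"
    using fg by (simp add: UP_def comp_def)
  finally have "coeff (UP S) (h \<circ> f) i \<otimes>\<^bsub>S\<^esub> coeff (UP S) (h \<circ> g) j \<in> prime_radical S"
    using assms(1) UP_comp_closed[OF f] UP_comp_closed[OF g]
    unfolding almost_armendariz_def by blast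
  then have "h (f i \<otimes> g j) \<in> prime_radical S"
    using f g UP_comp_closed[OF f] UP_comp_closed[OF g] by (simp add: coeff_UP UP_def mem_upD)
  then show "coeff (UP R) f i \<otimes> coeff (UP R) g j \<in> prime_radical R"
    using reflect f g by (simp add: coeff_UP UP_def mem_upD)
qed

theorem proposition2p6:
  fixes R :: "('a, 'b) ring_scheme" and I :: "'a set"
  assumes "ring R"
    and "ideal I R"
    and "nilpotent_ideal I R"
    and "almost_armendariz (R Quot I)"
  shows "almost_armendariz R"
proof -
  interpret I: ideal I R by fact
  interpret h: ring_hom_ring R "R Quot I" "a_r_coset R I"
    by (rule I.rcos_ring_hom_ring)
  show ?thesis
    using h.almost_armendariz_reflect[OF assms(4)] I.prime_radical_reflect_nilpotent_quotient[OF assms(2,3)]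
    by blast
qed

end
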